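(* Let $\mathcal{G}$ be a connected, homogeneous, bidirected coupled cell network with cell set $\mathcal{C}=\{1,\dots,n\}$ and edge set $\mathcal{E}$, each cell having phase space $\mathbb{R}$. Let $f:\mathbb{R}^n\to\mathbb{R}^n$ be the $\mathcal{G}$-admissible vector field with components \[ f_c(x)=\sum_{d\in I(c)}\phi_{[(c,d)]}(x_d-x_c),\qquad c\in\mathcal{C}, \] where for each edge type $\xi$, $\phi_\xi:\mathbb{R}\to\mathbb{R}$ is an odd $C^1$ function. Suppose there exists $\varepsilon>0$ such that $\alpha\,\phi_\xi(\alpha)>0$ for all $\alpha\in(-\varepsilon,\varepsilon)\setminus\{0\}$ and all edge types $\xi$. Let $\Delta=\{x\in\mathbb{R}^n: x_1=\dots=x_n\}$ be the total synchrony subspace and let $\Omega=\{x\in\mathbb{R}^n:\operatorname{dist}(x,\Delta)<r\}$ be the largest open hypercylinder around $\Delta$ such that $x\in\Omega$ implies $|x_d-x_c|<\varepsilon$ for all $(c,d)\in\mathcal{E}$. Then, for the system $\dot x=f(x)$, the total synchrony subspace $\Delta$ (which consists of equilibria) is asymptotically stable on $\Omega$ in the sense of Lyapunov.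
   Context: A coupled cell network consists of cells $\mathcal{C}=\{1,\dots,n\}$, edges $\mathcal{E}\subset\mathcal{C}\times\mathcal{C}$ without loops, and an equivalence relation on edges (edge types; $[e]$ is the type of $e$) compatible with an equivalence relation on cells. The input set of $c$ is the set of edges $(d,c)\in\mathcal{E}$; one writes $d\in I(c)$ when $(d,c)\in\mathcal{E}$. Cells $c,d$ are input equivalent if there is an edge-type preserving bijection between their input sets; the network is homogeneous if all cells are input equivalent. It is bidirected if $(i,j)\in\mathcal{E}$ iff $(j,i)\in\mathcal{E}$, with $(i,j)$ and $(j,i)$ of the same type. Connected means the underlying graph is connected. Admissible maps have components depending only on the cell's own variable and its inputs, with identical functional form across input-equivalent cells, edges of the same type being treated identically. *)

theory Defs
  imports "HOL-Analysis.Analysis"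
begin

(* Edges E :: ('n * 'n) set, an edge (d,c) goes from d to c, i.e. it is an input edge of c. *)

definition input_set :: "('n \<times> 'n) set \<Rightarrow> 'n \<Rightarrow> ('n \<times> 'n) set" where
  "input_set E c = {e \<in> E. snd e = c}"

definition no_loops :: "('n \<times> 'n) set \<Rightarrow> bool" where
  "no_loops E \<longleftrightarrow> (\<forall>c. (c, c) \<notin> E)"

definition input_equivalent :: "('n \<times> 'n) set \<Rightarrow> ('n \<times> 'n \<Rightarrow> 't) \<Rightarrow> 'n \<Rightarrow> 'n \<Rightarrow> bool" where
  "input_equivalent E ty c d \<longleftrightarrow>
     (\<exists>\<beta>. bij_betw \<beta> (input_set E c) (input_set E d) \<and> (\<forall>e\<in>input_set E c. ty (\<beta> e) = ty e))"

definition homogeneous :: "('n \<times> 'n) set \<Rightarrow> ('n \<times> 'n \<Rightarrow> 't) \<Rightarrow> bool" where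
  "homogeneous E ty \<longleftrightarrow> (\<forall>c d. input_equivalent E ty c d)"

definition bidirected :: "('n \<times> 'n) set \<Rightarrow> ('n \<times> 'n \<Rightarrow> 't) \<Rightarrow> bool" where
  "bidirected E ty \<longleftrightarrow> (\<forall>i j. (i, j) \<in> E \<longleftrightarrow> (j, i) \<in> E) \<and> (\<forall>i j. (i, j) \<in> E \<longrightarrow> ty (i, j) = ty (j, i))"

definition connected_network :: "('n \<times> 'n) set \<Rightarrow> bool" where
  "connected_network E \<longleftrightarrow> (\<forall>c d. (c, d) \<in> (E \<union> E\<inverse>)\<^sup>*)"

definition diff_field :: "('n::finite \<times> 'n) set \<Rightarrow> ('n \<times> 'n \<Rightarrow> 't) \<Rightarrow> ('t \<Rightarrow> real \<Rightarrow> real)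
    \<Rightarrow> real^'n \<Rightarrow> real^'n" where
  "diff_field E ty \<phi> x = (\<chi> c. \<Sum>d\<in>{d. (d, c) \<in> E}. \<phi> (ty (c, d)) (x $ d - x $ c))"

definition sync_space :: "(real^'n) set" where
  "sync_space = {x. \<forall>i j. x $ i = x $ j}"

definition cylinder :: "real \<Rightarrow> (real^'n) set" where
  "cylinder r = {x. infdist x sync_space < r}"

(* the largest open hypercylinder around Delta on which all coupled differences are < eps:
   union of all admissible cylinders (which is itself a cylinder, or the whole space) *)
definition max_cylinder :: "('n \<times> 'n) set \<Rightarrow> real \<Rightarrow> (real^'n) set" where
  "max_cylinder E \<epsilon> = \<Union>{cylinder r | r. r > 0 \<and>
       (\<forall>x\<in>cylinder r. \<forall>(c, d)\<in>E. \<bar>x $ d - x $ c\<bar> < \<epsilon>)}"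

definition is_solution :: "(real^'n \<Rightarrow> real^'n) \<Rightarrow> (real \<Rightarrow> real^'n) \<Rightarrow> bool" where
  "is_solution F x \<longleftrightarrow> (\<forall>t\<ge>0. (x has_vector_derivative F (x t)) (at t within {0..}))"

definition lyapunov_stable_set :: "('a::euclidean_space \<Rightarrow> 'a) \<Rightarrow> 'a set \<Rightarrow> bool" where
  "lyapunov_stable_set F A \<longleftrightarrow>
     (\<forall>e>0. \<exists>\<delta>>0. \<forall>x. (\<forall>t\<ge>0. (x has_vector_derivative F (x t)) (at t within {0..})) \<longrightarrow>
        infdist (x 0) A < \<delta> \<longrightarrow> (\<forall>t\<ge>0. infdist (x t) A < e))"

definition asymptotically_stable_on :: "('a::euclidean_space \<Rightarrow> 'a) \<Rightarrow> 'a set \<Rightarrow> 'a set \<Rightarrow> bool" where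
  "asymptotically_stable_on F A U \<longleftrightarrow>
     lyapunov_stable_set F A \<and>
     (\<forall>x. (\<forall>t\<ge>0. (x has_vector_derivative F (x t)) (at t within {0..})) \<longrightarrow> x 0 \<in> U \<longrightarrow>
        ((\<lambda>t. infdist (x t) A) \<longlongrightarrow> 0) at_top)"

end

theory Submission
  imports Defs
begin

(* The Lyapunov function is V x = \<Sum>c. (x_c - mean x)\<^sup>2, the squared distance from x to the
   synchrony subspace. Because the network is bidirected and every \<phi>_\<xi> is odd, the field sums to
   zero and V' = -D x with the dissipation D x = \<Sum>(d,c)\<in>E. (x_d - x_c) \<phi>(x_d - x_c). While all coupled
   differences stay below \<epsilon> every term of D is nonnegative, so V cannot grow and the cylinder of
   radius r is forward invariant. By connectivity D vanishes there only on the synchrony subspace;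
   D is continuous, so on the compact shells {\<eta> \<le> V \<le> V x\<^sub>0} of mean-zero states it is bounded
   below by a positive constant, which forces V \<rightarrow> 0. *)

lemma diff_le_if_deriv_le:
  fixes h h' :: "real \<Rightarrow> real"
  assumes deriv: "\<And>u. u \<in> S \<Longrightarrow> (h has_real_derivative h' u) (at u within S)"
    and "{s..t} \<subseteq> S" "s \<le> t"
    and bound: "\<And>u. s \<le> u \<Longrightarrow> u \<le> t \<Longrightarrow> h' u \<le> K"
  shows "h t - h s \<le> K * (t - s)"
proof -
  have "(h has_real_derivative h' u) (at u within {s..t})" if "s \<le> u" "u \<le> t" for u
    using assms(2) that by (intro DERIV_subset[OF deriv]) auto
  then obtain \<xi> where "\<xi> \<in> {s..t}" "h t - h s = h' \<xi> * (t - s)"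
    using mvt_very_simple[of s t h "\<lambda>u. (*) (h' u)"] \<open>s \<le> t\<close>
    by (auto simp: has_field_derivative_def)
  then show ?thesis
    using bound[of \<xi>] \<open>s \<le> t\<close> by (simp add: mult_right_mono)
qed

lemma le_initial_if_deriv_nonpos_below:
  fixes h h' :: "real \<Rightarrow> real"
  assumes deriv: "\<And>u. 0 \<le> u \<Longrightarrow> (h has_real_derivative h' u) (at u within {0..})"
    and "h 0 < R"
    and nonpos: "\<And>u. 0 \<le> u \<Longrightarrow> h u < R \<Longrightarrow> h' u \<le> 0"
    and "0 \<le> t"
  shows "h t \<le> h 0"
proof (rule ccontr)
  assume "\<not> h t \<le> h 0"
  define c where "c = (h 0 + min (h t) R) / 2"
  have c: "h 0 < c" "c < h t" "c < R"
    using \<open>h 0 < R\<close> \<open>\<not> h t \<le> h 0\<close> by (auto simp: c_def)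
  have cont: "continuous_on {0..t} h"
    using deriv by (metis DERIV_continuous atLeast_iff atLeastAtMost_iff
        continuous_on_eq_continuous_within continuous_within_subset subsetI)
  txt \<open>Up to the first time \<open>s\<close> at which \<open>h\<close> reaches \<open>c < R\<close>, \<open>h\<close> cannot increase, so
    \<open>h s \<le> h 0 < c\<close>.\<close>
  define S where "S = {u \<in> {0..t}. c \<le> h u}"
  define s where "s = Inf S"
  have "closed S"
    unfolding S_def by (rule continuous_on_closed_Collect_le[OF continuous_on_const cont]) simp
  moreover have "t \<in> S" "bdd_below S"
    using c \<open>0 \<le> t\<close> by (auto simp: S_def)
  ultimately have "s \<in> S" and first: "\<And>u. u \<in> S \<Longrightarrow> s \<le> u"
    unfolding s_def by (auto intro: closed_contains_Inf cInf_lower)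
  then have "0 \<le> s" "s \<le> t" by (auto simp: S_def)
  obtain u where u: "0 \<le> u" "u \<le> s" "h u = c"
    using IVT'[of h 0 c s] c \<open>s \<in> S\<close> \<open>0 \<le> s\<close> continuous_on_subset[OF cont, of "{0..s}"] \<open>s \<le> t\<close>
    by (auto simp: S_def)
  with first have "u = s" using \<open>s \<le> t\<close> by (force simp: S_def)
  have "h v \<le> c" if "0 \<le> v" "v \<le> s" for v
    using first[of v] that \<open>s \<le> t\<close> \<open>u = s\<close> u by (force simp: S_def)
  with c have "h' v \<le> 0" if "0 \<le> v" "v \<le> s" for v
    using nonpos that \<open>s \<le> t\<close> by force
  then have "h s - h 0 \<le> 0 * (s - 0)"
    using \<open>0 \<le> s\<close> by (intro diff_le_if_deriv_le[OF deriv]) auto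
  with u \<open>u = s\<close> c show False by simp
qed

lemma tendsto_zero_if_uniform_decrease:
  fixes h h' :: "real \<Rightarrow> real"
  assumes deriv: "\<And>u. 0 \<le> u \<Longrightarrow> (h has_real_derivative h' u) (at u within {0..})"
    and nonneg: "\<And>u. 0 \<le> u \<Longrightarrow> 0 \<le> h u"
    and nonpos: "\<And>u. 0 \<le> u \<Longrightarrow> h' u \<le> 0"
    and decrease: "\<And>\<eta>. \<eta> > 0 \<Longrightarrow> \<exists>w>0. \<forall>u\<ge>0. \<eta> \<le> h u \<longrightarrow> h' u \<le> - w"
  shows "(h \<longlongrightarrow> 0) at_top"
proof (rule tendstoI)
  fix e :: real
  assume "e > 0"
  then obtain w where "w > 0" and w: "\<forall>u\<ge>0. e \<le> h u \<longrightarrow> h' u \<le> - w"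
    using decrease by blast
  have nonincreasing: "h v \<le> h u" if "0 \<le> u" "u \<le> v" for u v
    using diff_le_if_deriv_le[OF deriv, of u v 0] nonpos that by auto
  have "\<exists>T\<ge>0. h T < e"
  proof (rule ccontr)
    assume "\<not> ?thesis"
    define T where "T = (h 0 + 1) / w"
    have "0 \<le> T" using nonneg[of 0] \<open>w > 0\<close> by (simp add: T_def)
    with \<open>\<not> ?thesis\<close> have "h T - h 0 \<le> - w * (T - 0)"
      using w by (intro diff_le_if_deriv_le[OF deriv]) (auto simp: not_less)
    also have "\<dots> = - h 0 - 1" using \<open>w > 0\<close> by (simp add: T_def)
    finally show False using nonneg[OF \<open>0 \<le> T\<close>] by simp
  qed
  then obtain T where "T \<ge> 0" "h T < e" by blast
  have "dist (h u) 0 < e" if "T \<le> u" for u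
    using nonincreasing[OF \<open>T \<ge> 0\<close> that] nonneg[of u] \<open>T \<ge> 0\<close> \<open>h T < e\<close> that by simp
  then show "\<forall>\<^sub>F u in at_top. dist (h u) 0 < e"
    using eventually_at_top_linorder by blast
qed

definition mean :: "real^'n::finite \<Rightarrow> real" where
  "mean z = (\<Sum>c\<in>UNIV. z $ c) / CARD('n)"

definition sum_sq_dev :: "real^'n::finite \<Rightarrow> real" where
  "sum_sq_dev z = (\<Sum>c\<in>UNIV. (z $ c - mean z)\<^sup>2)"

lemma sum_sq_dev_nonneg: "0 \<le> sum_sq_dev z"
  by (simp add: sum_sq_dev_def sum_nonneg)

lemma sum_sq_dev_le:
  fixes z :: "real^'n::finite"
  shows "sum_sq_dev z \<le> (\<Sum>c\<in>UNIV. (z $ c - m)\<^sup>2)"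
proof -
  have "(\<Sum>c\<in>UNIV. z $ c - mean z) = 0"
    by (simp add: sum_subtractf mean_def)
  then have "(\<Sum>c\<in>UNIV. (z $ c - m)\<^sup>2) = sum_sq_dev z + CARD('n) * (mean z - m)\<^sup>2"
    by (simp add: sum_sq_dev_def power2_eq_square algebra_simps sum.distrib sum_subtractf
        flip: sum_distrib_left sum_distrib_right)
  then show ?thesis by simp
qed

lemma dist_const_vec:
  fixes z :: "real^'n::finite"
  shows "dist z (\<chi> i. m) = sqrt (\<Sum>c\<in>UNIV. (z $ c - m)\<^sup>2)"
  by (simp add: dist_norm norm_vec_def L2_set_def)

lemma infdist_sync_space:
  fixes z :: "real^'n::finite"
  shows "infdist z sync_space = sqrt (sum_sq_dev z)"
proof (rule antisym)
  have "(\<chi> i. mean z) \<in> sync_space"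
    by (simp add: sync_space_def)
  then show "infdist z sync_space \<le> sqrt (sum_sq_dev z)"
    using infdist_le[of "\<chi> i. mean z" sync_space z] by (simp add: dist_const_vec sum_sq_dev_def)
  have "sqrt (sum_sq_dev z) \<le> dist z a" if "a \<in> sync_space" for a
  proof -
    obtain c0 :: 'n where True by blast
    from that have "a = (\<chi> i. a $ c0)"
      by (simp add: sync_space_def vec_eq_iff)
    then show ?thesis
      by (metis dist_const_vec real_sqrt_le_iff sum_sq_dev_le)
  qed
  moreover have "sync_space \<noteq> {}"
    using \<open>(\<chi> i. mean z) \<in> sync_space\<close> by blast
  ultimately show "sqrt (sum_sq_dev z) \<le> infdist z sync_space"
    unfolding infdist_notempty[OF \<open>sync_space \<noteq> {}\<close>] by (intro cINF_greatest) auto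
qed

lemma abs_sub_mean_le_infdist: "\<bar>z $ i - mean z\<bar> \<le> infdist z sync_space"
proof -
  have "(z $ i - mean z)\<^sup>2 \<le> sum_sq_dev z"
    unfolding sum_sq_dev_def by (rule member_le_sum) auto
  then show ?thesis
    by (simp add: infdist_sync_space real_le_rsqrt)
qed

lemma mean_diff_const [simp]: "mean (z - (\<chi> i. m)) = mean z - m"
  by (simp add: mean_def sum_subtractf field_simps)

lemma sum_sq_dev_diff_const [simp]: "sum_sq_dev (z - (\<chi> i. m)) = sum_sq_dev z"
  by (simp add: sum_sq_dev_def)

lemma norm_eq_sqrt_sum_sq_dev: "mean z = 0 \<Longrightarrow> norm z = sqrt (sum_sq_dev z)"
  by (simp add: sum_sq_dev_def norm_vec_def L2_set_def)

lemma continuous_sum_sq_dev: "continuous_on UNIV sum_sq_dev"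
  unfolding sum_sq_dev_def mean_def by (intro continuous_intros) auto

lemma continuous_mean: "continuous_on UNIV mean"
  unfolding mean_def by (intro continuous_intros) auto

definition edges_close :: "('n \<times> 'n) set \<Rightarrow> real \<Rightarrow> real^'n \<Rightarrow> bool" where
  "edges_close E \<epsilon> y \<longleftrightarrow> (\<forall>(c, d)\<in>E. \<bar>y $ d - y $ c\<bar> < \<epsilon>)"

lemma edges_close_if_infdist_sync_space_less:
  fixes z :: "real^'n::finite"
  assumes "infdist z sync_space < \<epsilon> / 2"
  shows "edges_close E \<epsilon> z"
  unfolding edges_close_def
proof (clarify)
  fix c d
  have "\<bar>z $ d - z $ c\<bar> \<le> \<bar>z $ d - mean z\<bar> + \<bar>z $ c - mean z\<bar>"
    by linarith
  also have "\<dots> < \<epsilon>"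
    using abs_sub_mean_le_infdist[of z d] abs_sub_mean_le_infdist[of z c] assms by linarith
  finally show "\<bar>z $ d - z $ c\<bar> < \<epsilon>" .
qed

definition dissipation ::
    "('n::finite \<times> 'n) set \<Rightarrow> ('n \<times> 'n \<Rightarrow> 't) \<Rightarrow> ('t \<Rightarrow> real \<Rightarrow> real) \<Rightarrow> real^'n \<Rightarrow> real" where
  "dissipation E ty \<phi> y = (\<Sum>(d, c)\<in>E. (y $ d - y $ c) * \<phi> (ty (d, c)) (y $ d - y $ c))"

lemma sum_in_edges:
  fixes E :: "('n::finite \<times> 'n) set"
  shows "(\<Sum>c\<in>UNIV. \<Sum>d\<in>{d. (d, c) \<in> E}. f d c) = (\<Sum>(d, c)\<in>E. f d c)"
proof -
  have "(\<Sum>c\<in>UNIV. \<Sum>d\<in>{d. (d, c) \<in> E}. f d c) = (\<Sum>(c, d)\<in>Sigma UNIV (\<lambda>c. {d. (d, c) \<in> E}). f d c)"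
    by (rule sum.Sigma) auto
  also have "Sigma UNIV (\<lambda>c. {d. (d, c) \<in> E}) = prod.swap ` E"
    by force
  also have "(\<Sum>(c, d)\<in>prod.swap ` E. f d c) = (\<Sum>(d, c)\<in>E. f d c)"
    by (subst sum.reindex) (auto simp: case_prod_beta)
  finally show ?thesis .
qed

lemma sum_edges_antisym:
  fixes a :: "'n \<Rightarrow> real" and g :: "'n \<Rightarrow> 'n \<Rightarrow> real"
  assumes "sym E" and antisym: "\<And>d c. (d, c) \<in> E \<Longrightarrow> g c d = - g d c"
  shows "(\<Sum>(d, c)\<in>E. a c * g d c) = - (\<Sum>(d, c)\<in>E. (a d - a c) * g d c) / 2"
proof -
  have "prod.swap ` E = E\<inverse>"
    by auto
  with \<open>sym E\<close> have "(\<Sum>(d, c)\<in>E. a c * g d c) = (\<Sum>(d, c)\<in>prod.swap ` E. a c * g d c)"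
    by (simp add: sym_conv_converse_eq)
  also have "\<dots> = (\<Sum>(d, c)\<in>E. a d * g c d)"
    by (simp add: sum.reindex case_prod_beta)
  also have "\<dots> = (\<Sum>(d, c)\<in>E. - (a d * g d c))"
    by (intro sum.cong) (auto simp: antisym)
  finally show ?thesis
    by (simp add: sum_negf algebra_simps sum_subtractf split_def)
qed

lemma bidirected_imp_sym: "bidirected E ty \<Longrightarrow> sym E"
  unfolding bidirected_def sym_def by blast

lemma sum_mult_diff_field:
  fixes E :: "('n::finite \<times> 'n) set"
  assumes "bidirected E ty"
  shows "(\<Sum>c\<in>UNIV. a c * diff_field E ty \<phi> y $ c) = (\<Sum>(d, c)\<in>E. a c * \<phi> (ty (d, c)) (y $ d - y $ c))"
proof -
  have "ty (c, d) = ty (d, c)" if "(d, c) \<in> E" for c d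
    using assms that unfolding bidirected_def by blast
  then have "diff_field E ty \<phi> y $ c = (\<Sum>d\<in>{d. (d, c) \<in> E}. \<phi> (ty (d, c)) (y $ d - y $ c))" for c
    unfolding diff_field_def by (auto intro!: sum.cong)
  then show ?thesis
    by (simp add: sum_distrib_left sum_in_edges[of "\<lambda>d c. a c * \<phi> (ty (d, c)) (y $ d - y $ c)"])
qed

lemma coupling_antisym:
  fixes \<phi> :: "'t \<Rightarrow> real \<Rightarrow> real"
  assumes "bidirected E ty" and odd: "\<forall>\<xi>\<in>ty ` E. \<forall>\<alpha>. \<phi> \<xi> (- \<alpha>) = - \<phi> \<xi> \<alpha>"
    and "(d, c) \<in> E"
  shows "\<phi> (ty (c, d)) (y $ c - y $ d) = - \<phi> (ty (d, c)) (y $ d - y $ c)"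
proof -
  have "ty (c, d) = ty (d, c)"
    using assms(1,3) unfolding bidirected_def by blast
  moreover have "\<phi> (ty (d, c)) (- (y $ d - y $ c)) = - \<phi> (ty (d, c)) (y $ d - y $ c)"
    using odd \<open>(d, c) \<in> E\<close> by blast
  ultimately show ?thesis
    by simp
qed

lemma sum_diff_field:
  fixes E :: "('n::finite \<times> 'n) set"
  assumes "bidirected E ty" and "\<forall>\<xi>\<in>ty ` E. \<forall>\<alpha>. \<phi> \<xi> (- \<alpha>) = - \<phi> \<xi> \<alpha>"
  shows "(\<Sum>c\<in>UNIV. diff_field E ty \<phi> y $ c) = 0"
  using sum_mult_diff_field[OF assms(1), of "\<lambda>_. 1"]
    sum_edges_antisym[OF bidirected_imp_sym[OF assms(1)] coupling_antisym[OF assms], where a = "\<lambda>_. 1"]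
  by simp

lemma inner_diff_field:
  fixes E :: "('n::finite \<times> 'n) set"
  assumes "bidirected E ty" and "\<forall>\<xi>\<in>ty ` E. \<forall>\<alpha>. \<phi> \<xi> (- \<alpha>) = - \<phi> \<xi> \<alpha>"
  shows "(\<Sum>c\<in>UNIV. y $ c * diff_field E ty \<phi> y $ c) = - dissipation E ty \<phi> y / 2"
  using sum_mult_diff_field[OF assms(1), of "\<lambda>c. y $ c"]
    sum_edges_antisym[OF bidirected_imp_sym[OF assms(1)] coupling_antisym[OF assms], where a = "\<lambda>c. y $ c"]
  by (simp add: dissipation_def)

lemma diff_field_sync_space:
  assumes "bidirected E ty" and odd: "\<forall>\<xi>\<in>ty ` E. \<forall>\<alpha>. \<phi> \<xi> (- \<alpha>) = - \<phi> \<xi> \<alpha>"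
    and "x \<in> sync_space"
  shows "diff_field E ty \<phi> x = 0"
proof -
  have zero: "\<phi> (ty (c, d)) 0 = 0" if "(d, c) \<in> E" for c d
  proof -
    have "(c, d) \<in> E"
      using assms(1) that unfolding bidirected_def by blast
    then have "\<phi> (ty (c, d)) (- 0) = - \<phi> (ty (c, d)) 0"
      using odd by blast
    then show ?thesis
      by simp
  qed
  have sync: "x $ d - x $ c = 0" for c d
    using \<open>x \<in> sync_space\<close> by (simp add: sync_space_def)
  have "diff_field E ty \<phi> x $ c = 0" for c
    unfolding diff_field_def using zero by (simp add: sync)
  then show ?thesis
    by (simp add: vec_eq_iff)
qed

lemma sync_space_if_edges_equal:
  assumes "connected_network E" and equal: "\<forall>(d, c)\<in>E. y $ d = y $ c"
  shows "y \<in> sync_space"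
proof -
  have "y $ a = y $ b" if "(a, b) \<in> (E \<union> E\<inverse>)\<^sup>*" for a b
    using that by (induction rule: rtrancl_induct) (use equal in auto)
  then show ?thesis
    using assms(1) by (simp add: connected_network_def sync_space_def)
qed

lemma dissipation_term_nonneg:
  fixes \<phi> :: "'t \<Rightarrow> real \<Rightarrow> real"
  assumes sign: "\<forall>\<xi>\<in>ty ` E. \<forall>\<alpha>. \<alpha> \<noteq> 0 \<and> \<bar>\<alpha>\<bar> < \<epsilon> \<longrightarrow> \<alpha> * \<phi> \<xi> \<alpha> > 0"
    and "edges_close E \<epsilon> y" and "(d, c) \<in> E"
  shows "0 \<le> (y $ d - y $ c) * \<phi> (ty (d, c)) (y $ d - y $ c)"
proof (cases "y $ d = y $ c")
  case False
  from assms(2,3) have "\<bar>y $ d - y $ c\<bar> < \<epsilon>"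
    by (force simp: edges_close_def abs_minus_commute)
  with False sign \<open>(d, c) \<in> E\<close> show ?thesis
    by (auto intro: less_imp_le)
qed simp

lemma dissipation_nonneg:
  fixes E :: "('n::finite \<times> 'n) set"
  assumes "\<forall>\<xi>\<in>ty ` E. \<forall>\<alpha>. \<alpha> \<noteq> 0 \<and> \<bar>\<alpha>\<bar> < \<epsilon> \<longrightarrow> \<alpha> * \<phi> \<xi> \<alpha> > 0"
    and "edges_close E \<epsilon> y"
  shows "0 \<le> dissipation E ty \<phi> y"
  unfolding dissipation_def using dissipation_term_nonneg[OF assms] by (auto intro: sum_nonneg)

lemma dissipation_pos:
  fixes E :: "('n::finite \<times> 'n) set"
  assumes "connected_network E"
    and sign: "\<forall>\<xi>\<in>ty ` E. \<forall>\<alpha>. \<alpha> \<noteq> 0 \<and> \<bar>\<alpha>\<bar> < \<epsilon> \<longrightarrow> \<alpha> * \<phi> \<xi> \<alpha> > 0"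
    and "edges_close E \<epsilon> y" and "y \<notin> sync_space"
  shows "0 < dissipation E ty \<phi> y"
proof -
  obtain d c where "(d, c) \<in> E" "y $ d \<noteq> y $ c"
    using sync_space_if_edges_equal assms(1,4) by blast
  moreover from this \<open>edges_close E \<epsilon> y\<close> have "\<bar>y $ d - y $ c\<bar> < \<epsilon>"
    by (force simp: edges_close_def abs_minus_commute)
  ultimately have "0 < (y $ d - y $ c) * \<phi> (ty (d, c)) (y $ d - y $ c)"
    using sign by auto
  with \<open>(d, c) \<in> E\<close> show ?thesis
    unfolding dissipation_def using dissipation_term_nonneg[OF sign \<open>edges_close E \<epsilon> y\<close>]
    by (intro sum_pos2[of E "(d, c)"]) auto
qed

lemma dissipation_diff_const [simp]: "dissipation E ty \<phi> (y - (\<chi> i. m)) = dissipation E ty \<phi> y"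
  by (simp add: dissipation_def)

lemma continuous_dissipation:
  fixes E :: "('n::finite \<times> 'n) set"
  assumes "\<forall>\<xi>\<in>ty ` E. continuous_on UNIV (\<phi> \<xi>)"
  shows "continuous_on UNIV (dissipation E ty \<phi>)"
proof -
  have "continuous_on UNIV (\<lambda>y::real^'n. (y $ d - y $ c) * \<phi> (ty (d, c)) (y $ d - y $ c))"
    if "(d, c) \<in> E" for d c
  proof -
    have "continuous_on UNIV (\<phi> (ty (d, c)))"
      using assms that by blast
    then have "continuous_on UNIV (\<lambda>y::real^'n. \<phi> (ty (d, c)) (y $ d - y $ c))"
      by (rule continuous_on_compose2[of UNIV]) (auto intro!: continuous_intros)
    then show ?thesis
      by (intro continuous_intros)
  qed
  then show ?thesis
    unfolding dissipation_def by (intro continuous_on_sum) auto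
qed

lemma dissipation_bounded_below:
  fixes E :: "('n::finite \<times> 'n) set"
  assumes "connected_network E"
    and sign: "\<forall>\<xi>\<in>ty ` E. \<forall>\<alpha>. \<alpha> \<noteq> 0 \<and> \<bar>\<alpha>\<bar> < \<epsilon> \<longrightarrow> \<alpha> * \<phi> \<xi> \<alpha> > 0"
    and cont: "\<forall>\<xi>\<in>ty ` E. continuous_on UNIV (\<phi> \<xi>)"
    and close: "\<And>z. sum_sq_dev z \<le> C \<Longrightarrow> edges_close E \<epsilon> z"
    and "0 < \<eta>"
  shows "\<exists>w>0. \<forall>z. \<eta> \<le> sum_sq_dev z \<longrightarrow> sum_sq_dev z \<le> C \<longrightarrow> w \<le> dissipation E ty \<phi> z"
proof -
  define K :: "(real^'n) set" where "K = {z. mean z = 0 \<and> \<eta> \<le> sum_sq_dev z \<and> sum_sq_dev z \<le> C}"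
  txt \<open>Both \<open>dissipation\<close> and \<open>sum_sq_dev\<close> are invariant under adding constants, so it suffices
    to bound \<open>dissipation\<close> on the compact set \<open>K\<close>.\<close>
  have centre: "z - (\<chi> i. mean z) \<in> K" if "\<eta> \<le> sum_sq_dev z" "sum_sq_dev z \<le> C" for z
    using that by (simp add: K_def)
  have "closed K"
    unfolding K_def using continuous_mean continuous_sum_sq_dev
    by (intro closed_Collect_conj closed_Collect_eq closed_Collect_le continuous_on_const)
  moreover have "bounded K"
    unfolding bounded_iff K_def by (auto simp: norm_eq_sqrt_sum_sq_dev intro!: exI[of _ "sqrt C"])
  ultimately have "compact K"
    by (simp add: compact_eq_bounded_closed)
  show ?thesis
  proof (cases "K = {}")
    case True
    then show ?thesis
      using centre by (intro exI[of _ 1]) auto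
  next
    case False
    obtain z0 where "z0 \<in> K" and min: "\<forall>z\<in>K. dissipation E ty \<phi> z0 \<le> dissipation E ty \<phi> z"
      using continuous_attains_inf[OF \<open>compact K\<close> False] continuous_on_subset[OF continuous_dissipation[OF cont]]
      by blast
    have "z0 \<notin> sync_space"
      using \<open>z0 \<in> K\<close> \<open>0 < \<eta>\<close> infdist_zero[of z0 sync_space] by (auto simp: K_def infdist_sync_space)
    then have "0 < dissipation E ty \<phi> z0"
      using dissipation_pos[OF assms(1) sign close] \<open>z0 \<in> K\<close> by (auto simp: K_def)
    with min centre show ?thesis
      by (intro exI[of _ "dissipation E ty \<phi> z0"]) (metis dissipation_diff_const)
  qed
qed

lemma has_real_derivative_vec_nth:
  fixes x :: "real \<Rightarrow> real^'n"
  assumes "(x has_vector_derivative v) (at t within S)"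
  shows "((\<lambda>t. x t $ c) has_real_derivative v $ c) (at t within S)"
  using bounded_linear.has_vector_derivative[OF bounded_linear_vec_nth assms, of c]
  by (simp add: has_real_derivative_iff_has_vector_derivative)

lemma has_real_derivative_sum_sq_dev:
  fixes E :: "('n::finite \<times> 'n) set"
  assumes "bidirected E ty" and "\<forall>\<xi>\<in>ty ` E. \<forall>\<alpha>. \<phi> \<xi> (- \<alpha>) = - \<phi> \<xi> \<alpha>"
    and "is_solution (diff_field E ty \<phi>) x" and "0 \<le> t"
  shows "((\<lambda>t. sum_sq_dev (x t)) has_real_derivative - dissipation E ty \<phi> (x t)) (at t within {0..})"
proof -
  let ?F = "diff_field E ty \<phi> (x t)"
  have coord: "((\<lambda>t. x t $ c) has_real_derivative ?F $ c) (at t within {0..})" for c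
    using assms(3,4) unfolding is_solution_def by (blast intro: has_real_derivative_vec_nth)
  have "((\<lambda>t. mean (x t)) has_real_derivative (\<Sum>c\<in>UNIV. ?F $ c) / CARD('n)) (at t within {0..})"
    unfolding mean_def by (intro DERIV_cdivide DERIV_sum coord)
  then have mean: "((\<lambda>t. mean (x t)) has_real_derivative 0) (at t within {0..})"
    by (simp add: sum_diff_field[OF assms(1,2)])
  have "((\<lambda>t. (x t $ c - mean (x t))\<^sup>2) has_real_derivative 2 * (x t $ c - mean (x t)) * ?F $ c)
      (at t within {0..})" for c
    by (rule derivative_eq_intros coord mean refl | simp)+
  then have "((\<lambda>t. sum_sq_dev (x t)) has_real_derivative (\<Sum>c\<in>UNIV. 2 * (x t $ c - mean (x t)) * ?F $ c))
      (at t within {0..})"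
    unfolding sum_sq_dev_def by (intro DERIV_sum)
  moreover have "(\<Sum>c\<in>UNIV. 2 * (x t $ c - mean (x t)) * ?F $ c)
      = 2 * (\<Sum>c\<in>UNIV. x t $ c * ?F $ c) - 2 * mean (x t) * (\<Sum>c\<in>UNIV. ?F $ c)"
    by (simp add: sum_distrib_left sum_subtractf[symmetric] algebra_simps)
  ultimately show ?thesis
    by (simp add: sum_diff_field[OF assms(1,2)] inner_diff_field[OF assms(1,2)])
qed

lemma infdist_sync_space_less_iff:
  fixes z :: "real^'n::finite"
  assumes "0 \<le> r"
  shows "infdist z sync_space < r \<longleftrightarrow> sum_sq_dev z < r\<^sup>2"
proof -
  have "infdist z sync_space < r \<longleftrightarrow> sqrt (sum_sq_dev z) < sqrt (r\<^sup>2)"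
    using assms by (simp add: infdist_sync_space)
  then show ?thesis
    by (simp only: real_sqrt_less_iff)
qed

lemma sum_sq_dev_solution_le_initial:
  fixes E :: "('n::finite \<times> 'n) set"
  assumes "bidirected E ty" and "\<forall>\<xi>\<in>ty ` E. \<forall>\<alpha>. \<phi> \<xi> (- \<alpha>) = - \<phi> \<xi> \<alpha>"
    and sign: "\<forall>\<xi>\<in>ty ` E. \<forall>\<alpha>. \<alpha> \<noteq> 0 \<and> \<bar>\<alpha>\<bar> < \<epsilon> \<longrightarrow> \<alpha> * \<phi> \<xi> \<alpha> > 0"
    and "is_solution (diff_field E ty \<phi>) x"
    and close: "\<And>z. sum_sq_dev z < R \<Longrightarrow> edges_close E \<epsilon> z"
    and "sum_sq_dev (x 0) < R" and "0 \<le> t"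
  shows "sum_sq_dev (x t) \<le> sum_sq_dev (x 0)"
  using has_real_derivative_sum_sq_dev[OF assms(1,2,4)] \<open>sum_sq_dev (x 0) < R\<close>
  by (rule le_initial_if_deriv_nonpos_below)
    (use dissipation_nonneg[OF sign close] \<open>0 \<le> t\<close> in auto)

lemma infdist_sync_space_solution_le_initial:
  fixes E :: "('n::finite \<times> 'n) set"
  assumes "bidirected E ty" and "\<forall>\<xi>\<in>ty ` E. \<forall>\<alpha>. \<phi> \<xi> (- \<alpha>) = - \<phi> \<xi> \<alpha>"
    and "\<forall>\<xi>\<in>ty ` E. \<forall>\<alpha>. \<alpha> \<noteq> 0 \<and> \<bar>\<alpha>\<bar> < \<epsilon> \<longrightarrow> \<alpha> * \<phi> \<xi> \<alpha> > 0"
    and "is_solution (diff_field E ty \<phi>) x"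
    and close: "\<And>z. infdist z sync_space < r \<Longrightarrow> edges_close E \<epsilon> z"
    and initial: "infdist (x 0) sync_space < r" and "0 \<le> t"
  shows "infdist (x t) sync_space \<le> infdist (x 0) sync_space"
proof -
  have "0 \<le> r"
    using infdist_nonneg[of "x 0" sync_space] initial by linarith
  then have "sum_sq_dev (x t) \<le> sum_sq_dev (x 0)"
    using close initial infdist_sync_space_less_iff
    by (intro sum_sq_dev_solution_le_initial[OF assms(1-4) _ _ \<open>0 \<le> t\<close>, where R = "r\<^sup>2"]) blast+
  then show ?thesis
    by (simp add: infdist_sync_space)
qed

lemma infdist_sync_space_solution_tendsto_0:
  fixes E :: "('n::finite \<times> 'n) set"
  assumes "connected_network E" and "bidirected E ty"
    and "\<forall>\<xi>\<in>ty ` E. \<forall>\<alpha>. \<phi> \<xi> (- \<alpha>) = - \<phi> \<xi> \<alpha>"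
    and "\<forall>\<xi>\<in>ty ` E. continuous_on UNIV (\<phi> \<xi>)"
    and sign: "\<forall>\<xi>\<in>ty ` E. \<forall>\<alpha>. \<alpha> \<noteq> 0 \<and> \<bar>\<alpha>\<bar> < \<epsilon> \<longrightarrow> \<alpha> * \<phi> \<xi> \<alpha> > 0"
    and "is_solution (diff_field E ty \<phi>) x"
    and close: "\<And>z. infdist z sync_space < r \<Longrightarrow> edges_close E \<epsilon> z"
    and initial: "infdist (x 0) sync_space < r"
  shows "((\<lambda>t. infdist (x t) sync_space) \<longlongrightarrow> 0) at_top"
proof -
  define h where "h t = sum_sq_dev (x t)" for t
  have "0 \<le> r"
    using infdist_nonneg[of "x 0" sync_space] initial by linarith
  then have "h 0 < r\<^sup>2"
    using initial infdist_sync_space_less_iff unfolding h_def by blast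
  have close_r: "edges_close E \<epsilon> z" if "sum_sq_dev z < r\<^sup>2" for z
    using that \<open>0 \<le> r\<close> close infdist_sync_space_less_iff by blast
  have close_h0: "edges_close E \<epsilon> z" if "sum_sq_dev z \<le> h 0" for z
    using that \<open>h 0 < r\<^sup>2\<close> close_r by force
  have deriv: "(h has_real_derivative - dissipation E ty \<phi> (x t)) (at t within {0..})" if "0 \<le> t" for t
    unfolding h_def using has_real_derivative_sum_sq_dev[OF assms(2,3,6) that] .
  have le_initial: "h t \<le> h 0" if "0 \<le> t" for t
    using sum_sq_dev_solution_le_initial[where R = "r\<^sup>2", OF assms(2,3) sign assms(6) close_r]
      \<open>h 0 < r\<^sup>2\<close> that
    unfolding h_def by blast
  have "(h \<longlongrightarrow> 0) at_top"
  proof (rule tendsto_zero_if_uniform_decrease[OF deriv])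
    fix \<eta> :: real
    assume "0 < \<eta>"
    then obtain w where "w > 0"
      and w: "\<forall>z. \<eta> \<le> sum_sq_dev z \<longrightarrow> sum_sq_dev z \<le> h 0 \<longrightarrow> w \<le> dissipation E ty \<phi> z"
      using dissipation_bounded_below[OF assms(1) sign assms(4) close_h0] by blast
    show "\<exists>w>0. \<forall>u\<ge>0. \<eta> \<le> h u \<longrightarrow> - dissipation E ty \<phi> (x u) \<le> - w"
      using \<open>w > 0\<close> w le_initial unfolding h_def by force
  next
    show "0 \<le> h t" for t
      by (simp add: h_def sum_sq_dev_nonneg)
    show "- dissipation E ty \<phi> (x t) \<le> 0" if "0 \<le> t" for t
      using dissipation_nonneg[OF sign close_h0] le_initial[OF that] unfolding h_def by simp
  qed
  then show ?thesis
    unfolding h_def infdist_sync_space using tendsto_real_sqrt by fastforce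
qed

lemma lyapunov_stable_sync_space:
  fixes E :: "('n::finite \<times> 'n) set"
  assumes "bidirected E ty" and "\<forall>\<xi>\<in>ty ` E. \<forall>\<alpha>. \<phi> \<xi> (- \<alpha>) = - \<phi> \<xi> \<alpha>"
    and "\<forall>\<xi>\<in>ty ` E. \<forall>\<alpha>. \<alpha> \<noteq> 0 \<and> \<bar>\<alpha>\<bar> < \<epsilon> \<longrightarrow> \<alpha> * \<phi> \<xi> \<alpha> > 0"
    and "0 < \<epsilon>"
  shows "lyapunov_stable_set (diff_field E ty \<phi>) sync_space"
  unfolding lyapunov_stable_set_def is_solution_def[symmetric]
proof (intro allI impI)
  fix e :: real
  assume "0 < e"
  have "infdist (x t) sync_space < e"
    if "is_solution (diff_field E ty \<phi>) x" "infdist (x 0) sync_space < min e (\<epsilon> / 2)" "0 \<le> t"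
    for x t
    using infdist_sync_space_solution_le_initial[OF assms(1-3) that(1)
        edges_close_if_infdist_sync_space_less _ that(3)] that(2)
    by fastforce
  then show "\<exists>\<delta>>0. \<forall>x. is_solution (diff_field E ty \<phi>) x \<longrightarrow> infdist (x 0) sync_space < \<delta> \<longrightarrow>
      (\<forall>t\<ge>0. infdist (x t) sync_space < e)"
    using \<open>0 < e\<close> \<open>0 < \<epsilon>\<close> by (intro exI[of _ "min e (\<epsilon> / 2)"]) auto
qed

theorem theorem5p1:
  fixes E :: "('n::finite \<times> 'n) set"
    and ty :: "'n \<times> 'n \<Rightarrow> 't"
    and \<phi> :: "'t \<Rightarrow> real \<Rightarrow> real"
    and \<epsilon> :: real
  assumes "no_loops E"
    and "connected_network E"
    and "homogeneous E ty"
    and "bidirected E ty"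
    and odd: "\<forall>\<xi>\<in>ty ` E. \<forall>\<alpha>. \<phi> \<xi> (- \<alpha>) = - \<phi> \<xi> \<alpha>"
    and C1: "\<forall>\<xi>\<in>ty ` E. \<phi> \<xi> C1_differentiable_on UNIV"
    and "\<epsilon> > 0"
    and sign: "\<forall>\<xi>\<in>ty ` E. \<forall>\<alpha>. \<alpha> \<noteq> 0 \<and> \<bar>\<alpha>\<bar> < \<epsilon> \<longrightarrow> \<alpha> * \<phi> \<xi> \<alpha> > 0"
  shows "(\<forall>x\<in>sync_space. diff_field E ty \<phi> x = 0)
     \<and> asymptotically_stable_on (diff_field E ty \<phi>) sync_space (max_cylinder E \<epsilon>)"
proof -
  note bid = \<open>bidirected E ty\<close>
  have cont: "\<forall>\<xi>\<in>ty ` E. continuous_on UNIV (\<phi> \<xi>)"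
    using C1 by (simp add: C1_differentiable_imp_continuous_on)
  have attractive: "((\<lambda>t. infdist (x t) sync_space) \<longlongrightarrow> 0) at_top"
    if sol: "is_solution (diff_field E ty \<phi>) x" and "x 0 \<in> max_cylinder E \<epsilon>" for x
  proof -
    obtain r where "\<And>z. infdist z sync_space < r \<Longrightarrow> edges_close E \<epsilon> z" "infdist (x 0) sync_space < r"
      using \<open>x 0 \<in> max_cylinder E \<epsilon>\<close> unfolding max_cylinder_def cylinder_def edges_close_def by blast
    then show ?thesis
      using infdist_sync_space_solution_tendsto_0[OF \<open>connected_network E\<close> bid odd cont sign sol]
      by blast
  qed
  show ?thesis
    using diff_field_sync_space[OF bid odd] lyapunov_stable_sync_space[OF bid odd sign \<open>\<epsilon> > 0\<close>]
      attractive
    unfolding asymptotically_stable_on_def is_solution_def by blast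
qed

end
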